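(* For every pair of integers $h,n\geq 2$, the trivial subgroup $\{(id,id)\}$ of $S_h\times S_n$ is an anonymity group, a neutrality group and a symmetry group with respect to $(h,n)$.
   Context: Permutations compose as $(\sigma\tau)(x)=\sigma(\tau(x))$. Let $G=S_h\times S_n$ and $\mathcal{P}=(S_n)^h$ (preference profiles), with $G$ acting by $(p^{(\varphi,\psi)})_i=\psi\,p_{\varphi^{-1}(i)}$. A social preference function (SPF) is any $F:\mathcal{P}\to S_n$. Its symmetry group is $G(F)=\{(\varphi,\psi)\in G: F(p^{(\varphi,\psi)})=\psi F(p)\ \forall p\}$, its anonymity group is $G_1(F)=G(F)\cap(S_h\times\{id\})$ and its neutrality group is $G_2(F)=G(F)\cap(\{id\}\times S_n)$. A subgroup $U$ is a symmetry (resp. anonymity, neutrality) group with respect to $(h,n)$ if $U=G(F)$ (resp. $U=G_1(F)$, $U=G_2(F)$) for some SPF $F$. *)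

theory Defs
  imports "HOL-Combinatorics.Permutations"
begin

text \<open>Voters are 0..<h, alternatives are 0..<n.\<close>

definition Sym :: "nat \<Rightarrow> (nat \<Rightarrow> nat) set" where
  "Sym k = {\<sigma>. \<sigma> permutes {..<k}}"

text \<open>Preference profiles (S_n)^h, represented extensionally (identity outside voters).\<close>
definition profiles :: "nat \<Rightarrow> nat \<Rightarrow> (nat \<Rightarrow> nat \<Rightarrow> nat) set" where
  "profiles h n = {p. (\<forall>i<h. p i \<in> Sym n) \<and> (\<forall>i\<ge>h. p i = id)}"

definition act :: "nat \<Rightarrow> (nat \<Rightarrow> nat) \<Rightarrow> (nat \<Rightarrow> nat) \<Rightarrow> (nat \<Rightarrow> nat \<Rightarrow> nat) \<Rightarrow> (nat \<Rightarrow> nat \<Rightarrow> nat)" where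
  "act h \<phi> \<psi> p = (\<lambda>i. if i < h then \<psi> \<circ> p (inv \<phi> i) else id)"

definition is_SPF :: "nat \<Rightarrow> nat \<Rightarrow> ((nat \<Rightarrow> nat \<Rightarrow> nat) \<Rightarrow> (nat \<Rightarrow> nat)) \<Rightarrow> bool" where
  "is_SPF h n F \<longleftrightarrow> (\<forall>p\<in>profiles h n. F p \<in> Sym n)"

definition symgroup :: "nat \<Rightarrow> nat \<Rightarrow> ((nat \<Rightarrow> nat \<Rightarrow> nat) \<Rightarrow> (nat \<Rightarrow> nat)) \<Rightarrow> ((nat \<Rightarrow> nat) \<times> (nat \<Rightarrow> nat)) set" where
  "symgroup h n F = {(\<phi>, \<psi>). \<phi> \<in> Sym h \<and> \<psi> \<in> Sym n \<and>
      (\<forall>p\<in>profiles h n. F (act h \<phi> \<psi> p) = \<psi> \<circ> F p)}"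

definition anongroup :: "nat \<Rightarrow> nat \<Rightarrow> ((nat \<Rightarrow> nat \<Rightarrow> nat) \<Rightarrow> (nat \<Rightarrow> nat)) \<Rightarrow> ((nat \<Rightarrow> nat) \<times> (nat \<Rightarrow> nat)) set" where
  "anongroup h n F = symgroup h n F \<inter> (Sym h \<times> {id})"

definition neutgroup :: "nat \<Rightarrow> nat \<Rightarrow> ((nat \<Rightarrow> nat \<Rightarrow> nat) \<Rightarrow> (nat \<Rightarrow> nat)) \<Rightarrow> ((nat \<Rightarrow> nat) \<times> (nat \<Rightarrow> nat)) set" where
  "neutgroup h n F = symgroup h n F \<inter> ({id} \<times> Sym n)"

definition is_symmetry_group :: "nat \<Rightarrow> nat \<Rightarrow> ((nat \<Rightarrow> nat) \<times> (nat \<Rightarrow> nat)) set \<Rightarrow> bool" where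
  "is_symmetry_group h n U \<longleftrightarrow> (\<exists>F. is_SPF h n F \<and> U = symgroup h n F)"

definition is_anonymity_group :: "nat \<Rightarrow> nat \<Rightarrow> ((nat \<Rightarrow> nat) \<times> (nat \<Rightarrow> nat)) set \<Rightarrow> bool" where
  "is_anonymity_group h n U \<longleftrightarrow> (\<exists>F. is_SPF h n F \<and> U = anongroup h n F)"

definition is_neutrality_group :: "nat \<Rightarrow> nat \<Rightarrow> ((nat \<Rightarrow> nat) \<times> (nat \<Rightarrow> nat)) set \<Rightarrow> bool" where
  "is_neutrality_group h n U \<longleftrightarrow> (\<exists>F. is_SPF h n F \<and> U = neutgroup h n F)"

end

theory Submission
  imports Defs
begin

text \<open>Fix a permutation \<open>\<sigma> \<noteq> id\<close> of the alternatives and call the profiles in which exactly the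
  first \<open>k\<close> voters (\<open>0 < k < h\<close>) report \<open>\<sigma>\<close> and all others report \<open>id\<close> the chain profiles.
  The SPF returning \<open>\<sigma>\<close> on chain profiles and \<open>id\<close> elsewhere has trivial symmetry group:
  applying \<open>(\<phi>, \<psi>)\<close> to the all-\<open>id\<close> profile yields a constant profile, which is not a chain
  profile, forcing \<open>\<psi> = id\<close>; then \<open>\<phi>\<close> must map chain profiles to chain profiles, and
  counting \<open>\<sigma>\<close>-voters shows that \<open>\<phi>\<close> fixes every initial segment of voters, so \<open>\<phi> = id\<close>.
  Anonymity and neutrality groups are subgroups of the symmetry group, hence trivial too.\<close>

definition marked_profile :: "nat \<Rightarrow> (nat \<Rightarrow> nat) \<Rightarrow> nat set \<Rightarrow> nat \<Rightarrow> nat \<Rightarrow> nat" where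
  "marked_profile h \<sigma> S = (\<lambda>i. if i < h \<and> i \<in> S then \<sigma> else id)"

definition chain_spf :: "nat \<Rightarrow> (nat \<Rightarrow> nat) \<Rightarrow> (nat \<Rightarrow> nat \<Rightarrow> nat) \<Rightarrow> nat \<Rightarrow> nat" where
  "chain_spf h \<sigma> p =
     (if \<exists>k. 0 < k \<and> k < h \<and> p = marked_profile h \<sigma> {..<k} then \<sigma> else id)"

lemma id_in_Sym: "id \<in> Sym n"
  unfolding Sym_def by simp

lemma marked_profile_in_profiles: "\<sigma> \<in> Sym n \<Longrightarrow> marked_profile h \<sigma> S \<in> profiles h n"
  unfolding profiles_def marked_profile_def using id_in_Sym by auto

lemma marked_profile_eq_iff:
  assumes "\<sigma> \<noteq> id"
  shows "marked_profile h \<sigma> S = marked_profile h \<sigma> T \<longleftrightarrow> S \<inter> {..<h} = T \<inter> {..<h}"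
proof
  assume eq: "marked_profile h \<sigma> S = marked_profile h \<sigma> T"
  have "(i < h \<and> i \<in> S) = (i < h \<and> i \<in> T)" for i
    using fun_cong[OF eq, of i] assms unfolding marked_profile_def by (auto split: if_splits)
  then show "S \<inter> {..<h} = T \<inter> {..<h}" by auto
qed (auto simp: marked_profile_def fun_eq_iff)

lemma act_marked_profile:
  assumes "\<phi> permutes {..<h}"
  shows "act h \<phi> id (marked_profile h \<sigma> S) = marked_profile h \<sigma> (\<phi> ` S)"
proof -
  have "inv \<phi> i < h" and "inv \<phi> i \<in> S \<longleftrightarrow> i \<in> \<phi> ` S" if "i < h" for i
  proof -
    show "inv \<phi> i < h"
      using permutes_in_image[OF permutes_inv[OF assms]] that by simp
    show "inv \<phi> i \<in> S \<longleftrightarrow> i \<in> \<phi> ` S"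
      using permutes_inverses[OF assms] by (metis image_iff)
  qed
  then show ?thesis
    unfolding act_def marked_profile_def by auto
qed

lemma act_id_id: "p \<in> profiles h n \<Longrightarrow> act h id id p = p"
  unfolding act_def profiles_def by auto

lemma id_id_in_symgroup: "(id, id) \<in> symgroup h n F"
  unfolding symgroup_def using act_id_id id_in_Sym by auto

lemma permutes_fixing_initial_segments:
  fixes \<phi> :: "nat \<Rightarrow> nat"
  assumes \<phi>: "\<phi> permutes {..<h}" and seg: "\<And>k. k < h \<Longrightarrow> \<phi> ` {..<k} = {..<k}"
  shows "\<phi> = id"
proof
  fix i
  show "\<phi> i = id i"
  proof (cases "i < h")
    case True
    have seg': "\<phi> ` {..<k} = {..<k}" if "k \<le> h" for k
    proof (cases "k = h")
      case False
      with that have "k < h" by simp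
      then show ?thesis by (rule seg)
    qed (simp add: permutes_image[OF \<phi>])
    have "\<phi> i < Suc i"
      using seg'[of "Suc i"] True by auto
    moreover have "\<phi> i \<notin> \<phi> ` {..<i}"
      using permutes_inj[OF \<phi>] by (auto dest: injD)
    then have "\<not> \<phi> i < i"
      using seg'[of i] True by auto
    ultimately show ?thesis by simp
  qed (simp add: permutes_not_in[OF \<phi>])
qed

lemma chain_spf_is_SPF: "\<sigma> \<in> Sym n \<Longrightarrow> is_SPF h n (chain_spf h \<sigma>)"
  unfolding is_SPF_def chain_spf_def using id_in_Sym by auto

lemma chain_spf_constant_profile:
  assumes "\<sigma> \<noteq> id"
  shows "chain_spf h \<sigma> (\<lambda>i. if i < h then \<psi> else id) = id"
proof -
  have "(\<lambda>i. if i < h then \<psi> else id) \<noteq> marked_profile h \<sigma> {..<k}" if "0 < k" "k < h" for k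
  proof
    assume eq: "(\<lambda>i. if i < h then \<psi> else id) = marked_profile h \<sigma> {..<k}"
    have "\<psi> = \<sigma>" using fun_cong[OF eq, of 0] that by (simp add: marked_profile_def)
    moreover have "\<psi> = id" using fun_cong[OF eq, of k] that by (simp add: marked_profile_def)
    ultimately show False using assms by simp
  qed
  then show ?thesis unfolding chain_spf_def by auto
qed

lemma symgroup_chain_spf_snd_eq_id:
  assumes "\<sigma> \<noteq> id" and "(\<phi>, \<psi>) \<in> symgroup h n (chain_spf h \<sigma>)"
  shows "\<psi> = id"
proof -
  have "(\<lambda>_. id) \<in> profiles h n" and "act h \<phi> \<psi> (\<lambda>_. id) = (\<lambda>i. if i < h then \<psi> else id)"
    unfolding profiles_def act_def using id_in_Sym by auto
  moreover have "chain_spf h \<sigma> (\<lambda>_. id) = id"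
    using chain_spf_constant_profile[OF assms(1), of h id] by simp
  ultimately show ?thesis
    using assms chain_spf_constant_profile[OF assms(1)] unfolding symgroup_def by fastforce
qed

lemma symgroup_chain_spf_fixes_initial_segments:
  assumes \<sigma>: "\<sigma> \<in> Sym n" "\<sigma> \<noteq> id" and sym: "(\<phi>, id) \<in> symgroup h n (chain_spf h \<sigma>)"
    and k: "0 < k" "k < h"
  shows "\<phi> ` {..<k} = {..<k}"
proof -
  have \<phi>: "\<phi> permutes {..<h}"
    using sym unfolding symgroup_def Sym_def by auto
  have "chain_spf h \<sigma> (marked_profile h \<sigma> (\<phi> ` {..<k})) = \<sigma>"
    using sym marked_profile_in_profiles[OF \<sigma>(1)] k
    unfolding symgroup_def act_marked_profile[OF \<phi>, symmetric] by (auto simp: chain_spf_def)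
  then obtain m where "m < h" and "marked_profile h \<sigma> (\<phi> ` {..<k}) = marked_profile h \<sigma> {..<m}"
    using \<sigma>(2) unfolding chain_spf_def by (auto split: if_splits)
  moreover have "\<phi> ` {..<k} \<subseteq> {..<h}"
    using permutes_image[OF \<phi>] k by auto
  ultimately have "\<phi> ` {..<k} = {..<m}"
    unfolding marked_profile_eq_iff[OF \<sigma>(2)] by auto
  moreover have "card (\<phi> ` {..<k}) = k"
    using card_image[OF inj_on_subset[OF permutes_inj[OF \<phi>]]] by simp
  ultimately show ?thesis by simp
qed

lemma symgroup_chain_spf:
  assumes "\<sigma> \<in> Sym n" "\<sigma> \<noteq> id"
  shows "symgroup h n (chain_spf h \<sigma>) = {(id, id)}"
proof -
  have "\<phi> = id \<and> \<psi> = id" if sym: "(\<phi>, \<psi>) \<in> symgroup h n (chain_spf h \<sigma>)" for \<phi> \<psi>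
  proof -
    have "\<psi> = id"
      using symgroup_chain_spf_snd_eq_id[OF assms(2) sym] .
    moreover have "\<phi> = id"
    proof (rule permutes_fixing_initial_segments)
      show "\<phi> permutes {..<h}"
        using sym unfolding symgroup_def Sym_def by auto
      show "\<phi> ` {..<k} = {..<k}" if "k < h" for k
        using symgroup_chain_spf_fixes_initial_segments[OF assms, of \<phi>] sym \<open>\<psi> = id\<close> that
        by (cases "k = 0") auto
    qed
    ultimately show ?thesis by simp
  qed
  then show ?thesis
    using id_id_in_symgroup by auto
qed

theorem mainTheorem7:
  fixes h n :: nat
  assumes "h \<ge> 2" and "n \<ge> 2"
  shows "is_anonymity_group h n {(id, id)} \<and> is_neutrality_group h n {(id, id)}
         \<and> is_symmetry_group h n {(id, id)}"
proof -
  \<comment> \<open>The construction works for every \<open>h\<close>; only \<open>n \<ge> 2\<close> is needed, to have some \<open>\<sigma> \<noteq> id\<close>.\<close>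
  define \<sigma> :: "nat \<Rightarrow> nat" where "\<sigma> = transpose 0 1"
  have \<sigma>: "\<sigma> \<in> Sym n" "\<sigma> \<noteq> id"
  proof -
    show "\<sigma> \<in> Sym n"
      using \<open>n \<ge> 2\<close> unfolding \<sigma>_def Sym_def by (auto intro!: permutes_swap_id)
    have "\<sigma> 0 \<noteq> id 0"
      unfolding \<sigma>_def by simp
    then show "\<sigma> \<noteq> id" by metis
  qed
  let ?F = "chain_spf h \<sigma>"
  have sym: "symgroup h n ?F = {(id, id)}"
    using symgroup_chain_spf[OF \<sigma>] .
  then have "anongroup h n ?F = {(id, id)}" and "neutgroup h n ?F = {(id, id)}"
    unfolding anongroup_def neutgroup_def using id_in_Sym by auto
  then show ?thesis
    unfolding is_anonymity_group_def is_neutrality_group_def is_symmetry_group_def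
    using sym chain_spf_is_SPF[OF \<sigma>(1)] by metis
qed

end
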